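(* Let $\mathsf K$ be a field of characteristic $0$ and let $F(X,Y)=f_n(X)Y^n+\dots+f_0(X)\in\mathsf K[X,Y]$ have $Y$-degree $n$, with $F(0,Y)$ not identically $0$. Suppose $\mathsf L$ is a finite extension of $\mathsf K$, $e_1,\dots,e_n$ are positive integers and $y_i=\sum_{k=\kappa_i}^\infty a_{ik}x^{k/e_i}\in\mathsf L((x^{1/e_i}))$ with $a_{i\kappa_i}\ne0$ ($i=1,\dots,n$) are such that $F(x,Y)=f_n(x)(Y-y_1)\cdots(Y-y_n)$. Let $$r=\min\Bigl\{i+j:\ \frac{\partial^{i+j}F}{\partial X^i\partial Y^j}(0,0)\neq 0\Bigr\}.$$ Then $$r=\sum_{i:\ \kappa_i>0}\min\{1,\kappa_i/e_i\},$$ the sum being over those $i$ with $\kappa_i>0$.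
   Context: $\mathsf L((x^{1/e}))$ denotes the field of formal Laurent series in $x^{1/e}$ with coefficients in $\mathsf L$ (a field containing $\mathsf K((x))$). *)

theory Defs
  imports "HOL-Computational_Algebra.Computational_Algebra"
begin

text \<open>Bivariate polynomials F(X,Y) in K[X,Y] are represented as 'k poly poly:
  the outer variable is Y, the coefficients coeff F j = f_j(X) are polynomials in X.\<close>

definition eval2 :: "'a::idom poly poly \<Rightarrow> 'a \<Rightarrow> 'a \<Rightarrow> 'a" where
  "eval2 F a b = poly (poly F [:b:]) a"

definition pderiv_X :: "'a::idom poly poly \<Rightarrow> 'a poly poly" where
  "pderiv_X F = map_poly pderiv F"

definition pderiv_Y :: "'a::idom poly poly \<Rightarrow> 'a poly poly" where
  "pderiv_Y F = pderiv F"

definition mixed_pderiv :: "nat \<Rightarrow> nat \<Rightarrow> 'a::idom poly poly \<Rightarrow> 'a poly poly" where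
  "mixed_pderiv i j F = (pderiv_X ^^ i) ((pderiv_Y ^^ j) F)"

definition field_emb :: "('k::field \<Rightarrow> 'l::field) \<Rightarrow> bool" where
  "field_emb \<phi> \<longleftrightarrow> \<phi> 1 = 1 \<and> (\<forall>a b. \<phi> (a + b) = \<phi> a + \<phi> b \<and> \<phi> (a * b) = \<phi> a * \<phi> b)"

definition finite_extension :: "('k::field \<Rightarrow> 'l::field) \<Rightarrow> bool" where
  "finite_extension \<phi> \<longleftrightarrow> field_emb \<phi> \<and>
     (\<exists>B. finite B \<and> (\<forall>z. \<exists>c. z = (\<Sum>b\<in>B. \<phi> (c b) * b)))"

text \<open>Embedding of a polynomial p(x) in K[x] into L((t)), where t = x^(1/E), i.e. x = t^E.\<close>
definition poly_to_puiseux :: "('k::field \<Rightarrow> 'l::field) \<Rightarrow> nat \<Rightarrow> 'k poly \<Rightarrow> 'l fls" where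
  "poly_to_puiseux \<phi> E p = fls_compose_power (fps_to_fls (fps_of_poly (map_poly \<phi> p))) E"

end

theory Submission
  imports Defs
begin

unbundle fps_syntax

text \<open>
  Substitute X = t^E with E = e_1 \<cdots> e_n, so that F becomes a polynomial G in Y over L((t)).
  For a weight c give Y the weight c and consider the Gauss valuation
  v_c(G) = min_j (ord_t (coeff G j) + c j), which is multiplicative.
  On F itself v_E(G) = E r and v_0(G) = 0 (since F(0,Y) \<noteq> 0).  On the factorisation,
  v_c(G) = ord_t f_n + \<Sum>_i min(c, ord_t y_i(t^E)), and ord_t y_i(t^E) = E \<kappa>_i / e_i.
  Subtracting the two instances c = E and c = 0 leaves E r = \<Sum>_{\<kappa>_i > 0} min(E, E \<kappa>_i / e_i).
\<close>

definition fls_vanishes_below :: "int \<Rightarrow> 'a::zero fls \<Rightarrow> bool" where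
  "fls_vanishes_below w f \<longleftrightarrow> (\<forall>m<w. f $$ m = 0)"

lemma fls_vanishes_below_subdegree [simp]: "fls_vanishes_below (fls_subdegree f) f"
  unfolding fls_vanishes_below_def by simp

lemma fls_vanishes_below_iff: "fls_vanishes_below w f \<longleftrightarrow> f = 0 \<or> w \<le> fls_subdegree f"
  unfolding fls_vanishes_below_def
  by (metis fls_eq0_below_subdegree fls_subdegree_geI fls_zero_nth order_less_le_trans)

lemma fls_vanishes_below_sum:
  "(\<And>i. i \<in> A \<Longrightarrow> fls_vanishes_below w (f i)) \<Longrightarrow> fls_vanishes_below w (\<Sum>i\<in>A. f i)"
  unfolding fls_vanishes_below_def by (simp add: fls_nth_sum)

lemma fls_vanishes_below_succ:
  "fls_vanishes_below w f \<Longrightarrow> f $$ w = 0 \<Longrightarrow> fls_vanishes_below (w + 1) f"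
  unfolding fls_vanishes_below_def by (metis zle_add1_eq_le order_le_less)

lemma fls_vanishes_below_mult:
  fixes f g :: "'a::field fls"
  assumes "fls_vanishes_below a f" "fls_vanishes_below b g"
  shows "fls_vanishes_below (a + b) (f * g)"
  using assms unfolding fls_vanishes_below_iff by (cases "f = 0 \<or> g = 0") auto

lemma fls_subdegree_eq_if_vanishes_below:
  "fls_vanishes_below w f \<Longrightarrow> f $$ w \<noteq> 0 \<Longrightarrow> fls_subdegree f = w"
  by (metis fls_subdegree_leI fls_vanishes_below_iff fls_zero_nth order_antisym)

lemma fls_times_nth_add_neq_0:
  fixes f g :: "'a::field fls"
  assumes "fls_vanishes_below a f" "f $$ a \<noteq> 0" "fls_vanishes_below b g" "g $$ b \<noteq> 0"
  shows "(f * g) $$ (a + b) \<noteq> 0"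
  using assms fls_times_base[of f g] fls_subdegree_eq_if_vanishes_below[of a f]
    fls_subdegree_eq_if_vanishes_below[of b g] by simp

lemma fls_compose_power_eq_0_iff:
  assumes "d > 0"
  shows "fls_compose_power f d = 0 \<longleftrightarrow> f = 0"
proof
  assume "fls_compose_power f d = 0"
  hence "fls_compose_power f d $$ (int d * fls_subdegree f) = 0" by simp
  thus "f = 0" using assms by (simp add: fls_nth_compose_power nth_fls_subdegree_zero_iff)
qed simp

lemma fls_subdegree_compose_power:
  fixes f :: "'a::field fls"
  assumes "f \<noteq> 0" "d > 0"
  shows "fls_subdegree (fls_compose_power f d) = int d * fls_subdegree f"
proof (rule fls_subdegree_eq_if_vanishes_below)
  show "fls_vanishes_below (int d * fls_subdegree f) (fls_compose_power f d)"
    unfolding fls_vanishes_below_def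
  proof (intro allI impI)
    fix m assume m: "m < int d * fls_subdegree f"
    show "fls_compose_power f d $$ m = 0"
    proof (cases "int d dvd m")
      case True
      then obtain q where q: "m = int d * q" by auto
      with m assms have "q < fls_subdegree f" by (simp add: mult_less_cancel_left)
      thus ?thesis using q assms by (simp add: fls_nth_compose_power)
    qed (use assms in \<open>simp add: fls_nth_compose_power\<close>)
  qed
  show "fls_compose_power f d $$ (int d * fls_subdegree f) \<noteq> 0"
    using assms by (simp add: fls_nth_compose_power)
qed

text \<open>has_gauss_val c G w says w = min_j (ord_t (coeff G j) + c j): w is the Gauss valuation of G
  with Y of weight c.\<close>

definition gauss_val_ge :: "int \<Rightarrow> 'a::zero fls poly \<Rightarrow> int \<Rightarrow> bool" where
  "gauss_val_ge c G w \<longleftrightarrow> (\<forall>j. fls_vanishes_below (w - c * int j) (coeff G j))"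

definition has_gauss_val :: "int \<Rightarrow> 'a::zero fls poly \<Rightarrow> int \<Rightarrow> bool" where
  "has_gauss_val c G w \<longleftrightarrow> gauss_val_ge c G w \<and> (\<exists>j. coeff G j $$ (w - c * int j) \<noteq> 0)"

lemma has_gauss_val_unique: "has_gauss_val c G a \<Longrightarrow> has_gauss_val c G b \<Longrightarrow> a = b"
proof -
  have le: "b \<le> a" if "has_gauss_val c G a" "has_gauss_val c G b" for a b
  proof -
    from that(1) obtain j where j: "coeff G j $$ (a - c * int j) \<noteq> 0"
      unfolding has_gauss_val_def by auto
    from that(2) have "fls_vanishes_below (b - c * int j) (coeff G j)"
      unfolding has_gauss_val_def gauss_val_ge_def by auto
    with j show ?thesis unfolding fls_vanishes_below_def by force
  qed
  show "has_gauss_val c G a \<Longrightarrow> has_gauss_val c G b \<Longrightarrow> a = b"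
    using le[of a b] le[of b a] by auto
qed

lemma gauss_val_ge_mult:
  fixes P Q :: "'a::field fls poly"
  assumes "gauss_val_ge c P a" "gauss_val_ge c Q b"
  shows "gauss_val_ge c (P * Q) (a + b)"
  unfolding gauss_val_ge_def coeff_mult
proof (intro allI fls_vanishes_below_sum)
  fix k i :: nat assume "i \<in> {..k}"
  hence "a + b - c * int k = (a - c * int i) + (b - c * int (k - i))"
    by (simp add: of_nat_diff algebra_simps)
  thus "fls_vanishes_below (a + b - c * int k) (coeff P i * coeff Q (k - i))"
    using assms fls_vanishes_below_mult unfolding gauss_val_ge_def by metis
qed

lemma has_gauss_val_first_index:
  assumes "has_gauss_val c P a"
  obtains i0 where "coeff P i0 $$ (a - c * int i0) \<noteq> 0"
    and "\<And>i. i < i0 \<Longrightarrow> fls_vanishes_below (a - c * int i + 1) (coeff P i)"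
proof -
  define i0 where "i0 = (LEAST i. coeff P i $$ (a - c * int i) \<noteq> 0)"
  have "coeff P i0 $$ (a - c * int i0) \<noteq> 0"
    using assms unfolding has_gauss_val_def i0_def by (metis (mono_tags, lifting) LeastI)
  moreover have "fls_vanishes_below (a - c * int i + 1) (coeff P i)" if "i < i0" for i
    using assms not_less_Least[OF that[unfolded i0_def]] fls_vanishes_below_succ
    unfolding has_gauss_val_def gauss_val_ge_def by blast
  ultimately show thesis using that by blast
qed

lemma has_gauss_val_mult:
  fixes P Q :: "'a::field fls poly"
  assumes P: "has_gauss_val c P a" and Q: "has_gauss_val c Q b"
  shows "has_gauss_val c (P * Q) (a + b)"
proof -
  have geP: "\<And>j. fls_vanishes_below (a - c * int j) (coeff P j)"
    and geQ: "\<And>j. fls_vanishes_below (b - c * int j) (coeff Q j)"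
    using P Q unfolding has_gauss_val_def gauss_val_ge_def by auto
  obtain i0 where i0: "coeff P i0 $$ (a - c * int i0) \<noteq> 0"
    and below_i0: "\<And>i. i < i0 \<Longrightarrow> fls_vanishes_below (a - c * int i + 1) (coeff P i)"
    using has_gauss_val_first_index[OF P] by blast
  obtain j0 where j0: "coeff Q j0 $$ (b - c * int j0) \<noteq> 0"
    and below_j0: "\<And>j. j < j0 \<Longrightarrow> fls_vanishes_below (b - c * int j + 1) (coeff Q j)"
    using has_gauss_val_first_index[OF Q] by blast
  define k where "k = i0 + j0"
  define w where "w = a + b - c * int k"
  have split: "w = (a - c * int i) + (b - c * int (k - i))" if "i \<le> k" for i
    using that unfolding w_def by (simp add: of_nat_diff algebra_simps)
  \<comment> \<open>in every other product one factor lies strictly above its bound\<close>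
  have other: "(coeff P i * coeff Q (k - i)) $$ w = 0" if "i \<le> k" "i \<noteq> i0" for i
  proof -
    have "fls_vanishes_below (w + 1) (coeff P i * coeff Q (k - i))"
    proof (cases "i < i0")
      case True
      show ?thesis
        using fls_vanishes_below_mult[OF below_i0[OF True] geQ[of "k - i"]] split[OF that(1)]
        by (simp add: add_ac)
    next
      case False
      with that have "k - i < j0" unfolding k_def by auto
      then show ?thesis
        using fls_vanishes_below_mult[OF geP[of i] below_j0[OF \<open>k - i < j0\<close>]] split[OF that(1)]
        by (simp add: add_ac)
    qed
    thus ?thesis unfolding fls_vanishes_below_def by simp
  qed
  have "coeff (P * Q) k $$ w = (\<Sum>i\<le>k. (coeff P i * coeff Q (k - i)) $$ w)"
    by (simp add: coeff_mult fls_nth_sum)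
  also have "\<dots> = (coeff P i0 * coeff Q (k - i0)) $$ w"
    by (subst sum.remove[of _ i0]) (use other k_def in \<open>auto intro!: sum.neutral\<close>)
  also have "\<dots> \<noteq> 0"
    using fls_times_nth_add_neq_0[OF geP i0 geQ j0] split[of i0] unfolding k_def by simp
  finally show ?thesis
    using gauss_val_ge_mult P Q unfolding has_gauss_val_def w_def by blast
qed

lemma has_gauss_val_1: "has_gauss_val c (1 :: 'a::field fls poly) 0"
  unfolding has_gauss_val_def gauss_val_ge_def
proof (intro conjI allI)
  fix j show "fls_vanishes_below (0 - c * int j) (coeff (1 :: 'a fls poly) j)"
    by (cases j) (auto simp: fls_vanishes_below_def coeff_1)
next
  show "\<exists>j. coeff (1 :: 'a fls poly) j $$ (0 - c * int j) \<noteq> 0" by (rule exI[of _ 0]) simp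
qed

lemma has_gauss_val_linear:
  fixes z :: "'a::field fls"
  assumes "z \<noteq> 0"
  shows "has_gauss_val c [:-z, 1:] (min c (fls_subdegree z))"
  unfolding has_gauss_val_def gauss_val_ge_def
proof (intro conjI allI)
  fix j
  show "fls_vanishes_below (min c (fls_subdegree z) - c * int j) (coeff [:- z, 1:] j)"
    by (cases j; cases "j - 1") (auto simp: fls_vanishes_below_def)
next
  show "\<exists>j. coeff [:- z, 1:] j $$ (min c (fls_subdegree z) - c * int j) \<noteq> 0"
  proof (cases "fls_subdegree z \<le> c")
    case True thus ?thesis using assms by (intro exI[of _ 0]) auto
  next
    case False thus ?thesis by (intro exI[of _ 1]) auto
  qed
qed

lemma has_gauss_val_smult:
  fixes u :: "'a::field fls"
  assumes "has_gauss_val c P w" "u \<noteq> 0"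
  shows "has_gauss_val c (smult u P) (fls_subdegree u + w)"
proof -
  have geP: "\<And>j. fls_vanishes_below (w - c * int j) (coeff P j)"
    using assms unfolding has_gauss_val_def gauss_val_ge_def by auto
  obtain j where j: "coeff P j $$ (w - c * int j) \<noteq> 0"
    using assms unfolding has_gauss_val_def by auto
  show ?thesis unfolding has_gauss_val_def gauss_val_ge_def
  proof (intro conjI allI exI)
    fix i show "fls_vanishes_below (fls_subdegree u + w - c * int i) (coeff (smult u P) i)"
      using fls_vanishes_below_mult[OF fls_vanishes_below_subdegree geP[of i]]
      by (simp add: algebra_simps)
  next
    show "coeff (smult u P) j $$ (fls_subdegree u + w - c * int j) \<noteq> 0"
      using fls_times_nth_add_neq_0[OF fls_vanishes_below_subdegree _ geP j] assms(2)
      by (simp add: algebra_simps)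
  qed
qed

lemma has_gauss_val_prod_linear:
  fixes n :: nat
  assumes "\<And>i. i < n \<Longrightarrow> z i \<noteq> (0 :: 'a::field fls)"
  shows "has_gauss_val c (\<Prod>i<n. [:- z i, 1:]) (\<Sum>i<n. min c (fls_subdegree (z i)))"
  using assms
proof (induction n)
  case 0 thus ?case using has_gauss_val_1 by simp
next
  case (Suc n)
  have "has_gauss_val c ((\<Prod>i<n. [:- z i, 1:]) * [:- z n, 1:])
      ((\<Sum>i<n. min c (fls_subdegree (z i))) + min c (fls_subdegree (z n)))"
    by (rule has_gauss_val_mult[OF Suc.IH has_gauss_val_linear]) (use Suc.prems in auto)
  thus ?case by (simp only: prod.lessThan_Suc sum.lessThan_Suc)
qed

lemma pochhammer_1_eq_fact: "pochhammer (1 :: 'a::comm_semiring_1) k = of_nat (fact k)"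
  using pochhammer_of_nat[of 1 k, where 'a='a] by (simp add: pochhammer_fact)

lemma eval2_mixed_pderiv_0_0:
  fixes F :: "'a::idom poly poly"
  shows "eval2 (mixed_pderiv i j F) 0 0 = of_nat (fact i * fact j) * coeff (coeff F j) i"
proof -
  have coeff_0: "coeff ((map_poly pderiv ^^ i) G) 0 = (pderiv ^^ i) (coeff G 0)"
    for G :: "'a poly poly"
    by (induction i) (simp_all add: coeff_map_poly)
  have "eval2 (mixed_pderiv i j F) 0 0 = coeff ((pderiv ^^ i) (coeff ((pderiv ^^ j) F) 0)) 0"
    unfolding eval2_def mixed_pderiv_def pderiv_X_def[abs_def] pderiv_Y_def[abs_def]
    by (simp add: poly_0_coeff_0 coeff_0)
  also have "\<dots> = of_nat (fact i * fact j) * coeff (coeff F j) i"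
    by (simp add: coeff_higher_pderiv pochhammer_1_eq_fact of_nat_poly flip: one_pCons)
  finally show ?thesis .
qed

lemma field_emb_0: "field_emb \<phi> \<Longrightarrow> \<phi> 0 = 0"
  unfolding field_emb_def by (metis add.right_neutral add_left_cancel)

lemma field_emb_eq_0_iff:
  assumes "field_emb \<phi>"
  shows "\<phi> x = 0 \<longleftrightarrow> x = 0"
proof
  assume "\<phi> x = 0"
  moreover have "\<phi> (x * inverse x) = \<phi> x * \<phi> (inverse x)"
    using assms unfolding field_emb_def by blast
  ultimately show "x = 0"
    using assms unfolding field_emb_def by (metis mult_zero_left right_inverse zero_neq_one)
qed (use field_emb_0[OF assms] in simp)

lemma poly_to_puiseux_0 [simp]: "poly_to_puiseux \<phi> E 0 = 0"
  unfolding poly_to_puiseux_def by simp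

lemma poly_to_puiseux_nth:
  assumes "E > 0" "\<phi> 0 = 0"
  shows "poly_to_puiseux \<phi> E p $$ m =
    (if 0 \<le> m \<and> int E dvd m then \<phi> (coeff p (nat (m div int E))) else 0)"
  unfolding poly_to_puiseux_def using assms
  by (auto simp: fls_nth_compose_power coeff_map_poly pos_imp_zdiv_neg_iff)

lemma poly_to_puiseux_nth_mult:
  assumes "E > 0" "\<phi> 0 = 0"
  shows "poly_to_puiseux \<phi> E p $$ (int E * int i) = \<phi> (coeff p i)"
  using assms by (simp add: poly_to_puiseux_nth)

lemma poly_to_puiseux_nth_eq_0:
  assumes "E > 0" "\<phi> 0 = 0" "\<nexists>q. m = int E * int q"
  shows "poly_to_puiseux \<phi> E p $$ m = 0"
proof -
  have "\<not> (0 \<le> m \<and> int E dvd m)"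
  proof
    assume "0 \<le> m \<and> int E dvd m"
    then obtain k where "m = int E * k" "0 \<le> k"
      using assms(1) by (auto simp: zero_le_mult_iff elim!: dvdE)
    hence "m = int E * int (nat k)" by simp
    with assms(3) show False by blast
  qed
  thus ?thesis using poly_to_puiseux_nth[of E \<phi>, OF assms(1,2), of p m] by argo
qed

definition weighted_order :: "nat \<Rightarrow> 'a::zero poly poly \<Rightarrow> nat" where
  "weighted_order c F = (LEAST m. \<exists>i j. i + c * j = m \<and> coeff (coeff F j) i \<noteq> 0)"

lemma weighted_order_0_eq_0:
  assumes "map_poly (\<lambda>p. poly p 0) F \<noteq> 0"
  shows "weighted_order 0 F = 0"
proof -
  obtain j where "coeff (map_poly (\<lambda>p. poly p 0) F) j \<noteq> 0"
    using assms leading_coeff_neq_0 by blast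
  hence "coeff (coeff F j) 0 \<noteq> 0" by (simp add: coeff_map_poly poly_0_coeff_0)
  hence "\<exists>i j. i + 0 * j = 0 \<and> coeff (coeff F j) i \<noteq> 0" by auto
  thus ?thesis unfolding weighted_order_def by (rule Least_eq_0)
qed

lemma Least_mixed_pderiv_0_0_eq_weighted_order:
  fixes F :: "'a::{idom, semiring_char_0} poly poly"
  shows "(LEAST m. \<exists>i j. i + j = m \<and> eval2 (mixed_pderiv i j F) 0 0 \<noteq> 0) = weighted_order 1 F"
  by (simp add: eval2_mixed_pderiv_0_0 weighted_order_def)

lemma has_gauss_val_poly_to_puiseux:
  fixes F :: "'k::field poly poly" and \<phi> :: "'k \<Rightarrow> 'l::field"
  assumes emb: "field_emb \<phi>" and E: "E > 0" and "F \<noteq> 0"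
  shows "has_gauss_val (int (E * c)) (map_poly (poly_to_puiseux \<phi> E) F)
           (int (E * weighted_order c F))"
proof -
  define G where "G = map_poly (poly_to_puiseux \<phi> E) F"
  define r where "r = weighted_order c F"
  have cG: "coeff G j = poly_to_puiseux \<phi> E (coeff F j)" for j
    by (simp add: G_def coeff_map_poly)
  note nth_mult = poly_to_puiseux_nth_mult[of E \<phi>, OF E field_emb_0[OF emb]]
  obtain j where "coeff F j \<noteq> 0" using \<open>F \<noteq> 0\<close> leading_coeff_neq_0 by blast
  then obtain i where "coeff (coeff F j) i \<noteq> 0" using leading_coeff_neq_0 by blast
  hence "\<exists>m i j. i + c * j = m \<and> coeff (coeff F j) i \<noteq> 0" by blast
  hence "\<exists>i1 j1. i1 + c * j1 = r \<and> coeff (coeff F j1) i1 \<noteq> 0"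
    unfolding r_def weighted_order_def by (rule LeastI_ex)
  then obtain i1 j1 where ij1: "i1 + c * j1 = r" "coeff (coeff F j1) i1 \<noteq> 0" by blast
  have below_r: "coeff (coeff F j) i = 0" if "i + c * j < r" for i j
    using not_less_Least[OF that[unfolded r_def weighted_order_def]] by blast
  have "gauss_val_ge (int (E * c)) G (int (E * r))"
    unfolding gauss_val_ge_def fls_vanishes_below_def
  proof (intro allI impI)
    fix j m assume m: "m < int (E * r) - int (E * c) * int j"
    show "coeff G j $$ m = 0"
    proof (cases "\<exists>q. m = int E * int q")
      case True
      then obtain q where q: "m = int E * int q" by blast
      with m have "int E * int (q + c * j) < int E * int r" by (simp add: algebra_simps)
      hence "q + c * j < r" using E by (simp only: mult_less_cancel_left_pos of_nat_less_iff of_nat_0_less_iff)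
      thus ?thesis using q by (simp add: cG nth_mult below_r field_emb_0[OF emb])
    next
      case False
      thus ?thesis using poly_to_puiseux_nth_eq_0[of E \<phi>, OF E field_emb_0[OF emb]] by (simp add: cG)
    qed
  qed
  moreover have "int (E * r) - int (E * c) * int j1 = int E * int i1"
    by (simp add: algebra_simps flip: ij1(1))
  hence "coeff G j1 $$ (int (E * r) - int (E * c) * int j1) \<noteq> 0"
    using ij1(2) by (simp add: cG nth_mult field_emb_eq_0_iff[OF emb])
  ultimately show ?thesis unfolding has_gauss_val_def G_def[symmetric] r_def[symmetric] by blast
qed

lemma poly_to_puiseux_eq_0_iff:
  assumes "field_emb \<phi>" "E > 0"
  shows "poly_to_puiseux \<phi> E p = 0 \<longleftrightarrow> p = 0"
proof
  assume "poly_to_puiseux \<phi> E p = 0"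
  hence "poly_to_puiseux \<phi> E p $$ (int E * int (degree p)) = 0" by simp
  thus "p = 0"
    using assms by (simp add: poly_to_puiseux_nth field_emb_0 field_emb_eq_0_iff)
qed simp

lemma has_gauss_val_diff_of_factorisation:
  fixes u :: "'a::field fls" and n :: nat
  assumes "G = smult u (\<Prod>i<n. [:- z i, 1:])" "u \<noteq> 0" "\<forall>i<n. z i \<noteq> 0"
    and "has_gauss_val c G v" "has_gauss_val 0 G 0"
  shows "v = (\<Sum>i<n. min c (fls_subdegree (z i)) - min 0 (fls_subdegree (z i)))"
proof -
  have val: "has_gauss_val c' G (fls_subdegree u + (\<Sum>i<n. min c' (fls_subdegree (z i))))" for c'
  proof -
    have "has_gauss_val c' (\<Prod>i<n. [:- z i, 1:]) (\<Sum>i<n. min c' (fls_subdegree (z i)))"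
      using assms(3) by (intro has_gauss_val_prod_linear) auto
    thus ?thesis unfolding assms(1) using assms(2) by (rule has_gauss_val_smult)
  qed
  have "v = fls_subdegree u + (\<Sum>i<n. min c (fls_subdegree (z i)))"
    using has_gauss_val_unique[OF assms(4) val] .
  moreover have "0 = fls_subdegree u + (\<Sum>i<n. min 0 (fls_subdegree (z i)))"
    using has_gauss_val_unique[OF assms(5) val] .
  ultimately show ?thesis by (simp add: sum_subtractf)
qed

lemma min_diff_min_0_mult:
  fixes D a b :: "'a::linordered_idom"
  assumes "D \<ge> 0" "a \<ge> 0"
  shows "min (D * a) (D * b) - min 0 (D * b) = D * (if b > 0 then min a b else 0)"
proof (cases "b > 0")
  case True
  thus ?thesis using assms by (simp add: min_mult_distrib_left)
next
  case False
  hence "D * b \<le> 0" "0 \<le> D * a" using assms by (simp_all add: mult_nonneg_nonpos)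
  thus ?thesis using False by simp
qed

lemma sum_min_difference_eq:
  fixes E :: nat and e :: "nat \<Rightarrow> nat" and k :: "nat \<Rightarrow> int"
  assumes "\<forall>i<n. e i > 0 \<and> e i dvd E"
  shows "real_of_int (\<Sum>i<n. min (int E) (int (E div e i) * k i) - min 0 (int (E div e i) * k i)) =
    real E * (\<Sum>i\<in>{i. i < n \<and> k i > 0}. min 1 (real_of_int (k i) / real (e i)))"
proof -
  have summand: "real_of_int (min (int E) (int (E div e i) * k i) - min 0 (int (E div e i) * k i)) =
      real E * (if k i > 0 then min 1 (real_of_int (k i) / real (e i)) else 0)" if "i < n" for i
  proof -
    from assms that have ei: "e i > 0" and "e i dvd E" by auto
    then obtain D where E_eq: "E = e i * D" by (auto elim: dvdE)
    have "E div e i = D" using ei E_eq by simp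
    have "min (int E) (int D * k i) - min 0 (int D * k i) =
        int D * (if k i > 0 then min (int (e i)) (k i) else 0)"
      using min_diff_min_0_mult[of "int D" "int (e i)" "k i"] by (simp add: E_eq mult.commute)
    moreover have "min (real (e i)) (real_of_int (k i)) =
        real (e i) * min 1 (real_of_int (k i) / real (e i))"
      using ei by (simp add: min_mult_distrib_left)
    ultimately show ?thesis
      unfolding \<open>E div e i = D\<close> by (cases "k i > 0") (simp_all add: E_eq mult_ac of_int_min)
  qed
  have "real_of_int (\<Sum>i<n. min (int E) (int (E div e i) * k i) - min 0 (int (E div e i) * k i)) =
      (\<Sum>i<n. real E * (if k i > 0 then min 1 (real_of_int (k i) / real (e i)) else 0))"
    unfolding of_int_sum by (rule sum.cong) (simp_all only: summand lessThan_iff)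
  also have "\<dots> = real E * (\<Sum>i<n. if k i > 0 then min 1 (real_of_int (k i) / real (e i)) else 0)"
    by (rule sum_distrib_left[symmetric])
  also have "(\<Sum>i<n. if k i > 0 then min 1 (real_of_int (k i) / real (e i)) else 0) =
      (\<Sum>i\<in>{i. i < n \<and> k i > 0}. min 1 (real_of_int (k i) / real (e i)))"
  proof -
    have "{i. i < n \<and> k i > 0} = {i \<in> {..<n}. k i > 0}" by auto
    thus ?thesis by (simp only: sum.inter_filter[OF finite_lessThan])
  qed
  finally show ?thesis .
qed

theorem mainTheorem6:
  fixes F :: "'k::field_char_0 poly poly"
    and \<phi> :: "'k \<Rightarrow> 'l::field"
    and n :: nat
    and e :: "nat \<Rightarrow> nat"
    and y :: "nat \<Rightarrow> 'l fls"
  assumes degF: "degree F = n"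
    and F0: "poly (map_poly (\<lambda>p. poly p 0) F) \<noteq> poly 0"
    and ext: "finite_extension \<phi>"
    and epos: "\<forall>i<n. e i > 0"
    and ynz: "\<forall>i<n. y i \<noteq> 0"
    and fact: "map_poly (poly_to_puiseux \<phi> (\<Prod>i<n. e i)) F =
       smult (poly_to_puiseux \<phi> (\<Prod>i<n. e i) (coeff F n))
         (\<Prod>i<n. [: - fls_compose_power (y i) ((\<Prod>i<n. e i) div e i), 1 :])"
  shows "real (LEAST m. \<exists>i j. i + j = m \<and> eval2 (mixed_pderiv i j F) 0 0 \<noteq> 0) =
    (\<Sum>i\<in>{i. i < n \<and> fls_subdegree (y i) > 0}.
        min 1 (real_of_int (fls_subdegree (y i)) / real (e i)))"
proof -
  define E where "E = (\<Prod>i<n. e i)"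
  define G where "G = map_poly (poly_to_puiseux \<phi> E) F"
  define u where "u = poly_to_puiseux \<phi> E (coeff F n)"
  define z where "z i = fls_compose_power (y i) (E div e i)" for i
  \<comment> \<open>only the embedding is used, not the finiteness of the extension\<close>
  have emb: "field_emb \<phi>" using ext unfolding finite_extension_def by simp
  have e_dvd: "\<forall>i<n. e i > 0 \<and> e i dvd E" using epos unfolding E_def by (simp add: dvd_prodI)
  have "E > 0" unfolding E_def using epos by (simp add: prod_pos)
  hence d_pos: "\<forall>i<n. E div e i > 0" using e_dvd by (simp add: div_greater_zero_iff dvd_imp_le)
  have "F \<noteq> 0" "map_poly (\<lambda>p. poly p 0) F \<noteq> 0" using F0 by auto
  note gauss_val = has_gauss_val_poly_to_puiseux[OF emb \<open>E > 0\<close> \<open>F \<noteq> 0\<close>, folded G_def]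
  have at_E: "has_gauss_val (int E) G (int E * int (weighted_order 1 F))"
    using gauss_val[of 1] by simp
  have at_0: "has_gauss_val 0 G 0"
    using gauss_val[of 0] weighted_order_0_eq_0[OF \<open>map_poly _ F \<noteq> 0\<close>] by simp
  have "G = smult u (\<Prod>i<n. [:- z i, 1:])"
    unfolding G_def u_def z_def E_def by (rule fact)
  moreover have "u \<noteq> 0"
    using \<open>F \<noteq> 0\<close> degF poly_to_puiseux_eq_0_iff[OF emb \<open>E > 0\<close>] unfolding u_def
    by (metis leading_coeff_0_iff)
  moreover have "\<forall>i<n. z i \<noteq> 0" using ynz d_pos by (simp add: z_def fls_compose_power_eq_0_iff)
  ultimately have "int E * int (weighted_order 1 F) =
      (\<Sum>i<n. min (int E) (fls_subdegree (z i)) - min 0 (fls_subdegree (z i)))"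
    by (rule has_gauss_val_diff_of_factorisation[OF _ _ _ at_E at_0])
  also have "\<dots> = (\<Sum>i<n. min (int E) (int (E div e i) * fls_subdegree (y i))
                         - min 0 (int (E div e i) * fls_subdegree (y i)))"
    using ynz d_pos by (intro sum.cong) (simp_all add: z_def fls_subdegree_compose_power)
  finally have order_eq: "int E * int (weighted_order 1 F) = \<dots>" .
  have "real E * real (weighted_order 1 F) = real_of_int (int E * int (weighted_order 1 F))"
    by simp
  also have "\<dots> = real E * (\<Sum>i\<in>{i. i < n \<and> fls_subdegree (y i) > 0}.
                        min 1 (real_of_int (fls_subdegree (y i)) / real (e i)))"
    unfolding order_eq by (rule sum_min_difference_eq[OF e_dvd])
  finally show ?thesis
    using \<open>E > 0\<close> by (simp add: Least_mixed_pderiv_0_0_eq_weighted_order)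
qed

end
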